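(* Let $M,N:\Sigma\to c(X)$ be multimeasures with $M\ll N$, and assume that $N$ satisfies the countable chain condition. Then for every $A\in\Sigma\setminus\mathcal N(M)$ there exists $B\in\Sigma\setminus\mathcal N(M)$ with $B\subseteq A$ such that $N\ll M$ on $\Sigma_B$, i.e. every $E\in\Sigma_B$ with $M(E)=\{0\}$ satisfies $N(E)=\{0\}$.
   Context: $(\Omega,\Sigma)$ is a measurable space and $X$ is a Hausdorff locally convex space with dual $X'$. $c(X)$ is the family of nonempty closed convex subsets of $X$; $s(x',C)=\sup\{\langle x',x\rangle:x\in C\}$. A multimeasure is a map $M:\Sigma\to c(X)$ such that for every $x'\in X'$ the set function $E\mapsto s(x',M(E))$ is a $\sigma$-finite countably additive measure with values in $(-\infty,+\infty]$. $\mathcal N(M)=\{E\in\Sigma:M(E)=\{0\}\}$. $M\ll N$ means $\mathcal N(N)\subseteq\mathcal N(M)$. $\Sigma_B=\{E\in\Sigma:E\subseteq B\}$. A multimeasure $N$ satisfies the countable chain condition (ccc) if every family of pairwise disjoint sets in $\Sigma\setminus\mathcal N(N)$ is at most countable. *)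

theory Defs
  imports "HOL-Analysis.Analysis"
begin

text \<open>Hausdorff locally convex (real) topological vector spaces (convexity of V written out,
  since the constant convex cannot be used inside a class specification).\<close>
class locally_convex_space = real_vector + t2_space +
  assumes add_continuous:
    "\<And>x y::'a. ((\<lambda>p. fst p + snd p) \<longlongrightarrow> x + y) (nhds x \<times>\<^sub>F nhds y)"
  assumes scaleR_continuous:
    "\<And>(c::real) (x::'a). ((\<lambda>p. fst p *\<^sub>R snd p) \<longlongrightarrow> c *\<^sub>R x) (nhds c \<times>\<^sub>F nhds x)"
  assumes convex_nhds_base:
    "\<And>U. open U \<Longrightarrow> 0 \<in> U \<Longrightarrow> \<exists>V. open V \<and> (\<forall>x\<in>V. \<forall>y\<in>V. \<forall>u\<ge>0. \<forall>v\<ge>0. u + v = 1 \<longrightarrow> u *\<^sub>R x + v *\<^sub>R y \<in> V) \<and> 0 \<in> V \<and> V \<subseteq> U"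

definition topdual :: "('a::locally_convex_space \<Rightarrow> real) set" where
  "topdual = {f. linear f \<and> continuous_on UNIV f}"

definition cc_sets :: "'a::locally_convex_space set set" where
  "cc_sets = {C. C \<noteq> {} \<and> closed C \<and> convex C}"

definition support_fun :: "('a \<Rightarrow> real) \<Rightarrow> 'a set \<Rightarrow> ereal" where
  "support_fun f C = (SUP x\<in>C. ereal (f x))"

definition ext_signed_measure :: "'b measure \<Rightarrow> ('b set \<Rightarrow> ereal) \<Rightarrow> bool" where
  "ext_signed_measure S \<mu> \<longleftrightarrow>
     (\<forall>E\<in>sets S. \<mu> E \<noteq> -\<infinity>) \<and> \<mu> {} = 0 \<and>
     (\<forall>F::nat \<Rightarrow> 'b set. range F \<subseteq> sets S \<longrightarrow> disjoint_family F \<longrightarrow>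
        (\<lambda>n. \<Sum>i<n. \<mu> (F i)) \<longlonglongrightarrow> \<mu> (\<Union>i. F i)) \<and>
     (\<exists>A::nat \<Rightarrow> 'b set. range A \<subseteq> sets S \<and> (\<Union>i. A i) = space S \<and>
        (\<forall>i. \<bar>\<mu> (A i)\<bar> \<noteq> \<infinity>))"

definition multimeasure :: "'b measure \<Rightarrow> ('b set \<Rightarrow> 'a::locally_convex_space set) \<Rightarrow> bool" where
  "multimeasure S M \<longleftrightarrow> (\<forall>E\<in>sets S. M E \<in> cc_sets) \<and>
     (\<forall>f\<in>topdual. ext_signed_measure S (\<lambda>E. support_fun f (M E)))"

definition mm_null :: "'b measure \<Rightarrow> ('b set \<Rightarrow> 'a::zero set) \<Rightarrow> 'b set set" where
  "mm_null S M = {E \<in> sets S. M E = {0}}"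

definition mm_abs_cont :: "'b measure \<Rightarrow> ('b set \<Rightarrow> 'a::zero set) \<Rightarrow> ('b set \<Rightarrow> 'a set) \<Rightarrow> bool" where
  "mm_abs_cont S M N \<longleftrightarrow> mm_null S N \<subseteq> mm_null S M"

definition mm_ccc :: "'b measure \<Rightarrow> ('b set \<Rightarrow> 'a::zero set) \<Rightarrow> bool" where
  "mm_ccc S N \<longleftrightarrow> (\<forall>F. F \<subseteq> sets S - mm_null S N \<longrightarrow> disjoint F \<longrightarrow> countable F)"

end

theory Submission
  imports Defs
begin

text \<open>Take a maximal disjoint family D of measurable sets E \<subseteq> A with M E = {0} and
  N E \<noteq> {0}. By the countable chain condition for N, D is countable, so \<Union>D is M-null and
  B = A - \<Union>D is not; maximality of D says that N vanishes on the M-null measurable subsets of B.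

  Countable additivity of M is only available for the support functions s(x', M E), so closing
  the M-null sets under countable disjoint unions requires that X' separates the points of X.
  This is Hahn-Banach, proved with Zorn's lemma on graphs of partial linear functionals that are
  dominated by the Minkowski gauge of a convex neighbourhood of 0.\<close>

lemma lcs_tendsto_scaleR_left:
  fixes x :: "'a::locally_convex_space"
  shows "((\<lambda>s. s *\<^sub>R x) \<longlongrightarrow> s0 *\<^sub>R x) (nhds s0)"
proof -
  have "LIM s (nhds s0). (s, x) :> nhds s0 \<times>\<^sub>F nhds x"
    by (rule filterlim_Pair) (auto simp: filterlim_ident)
  from filterlim_compose[OF scaleR_continuous this] show ?thesis by simp
qed

lemma lcs_tendsto_scaleR_diff:
  fixes x0 :: "'a::locally_convex_space"
  shows "((\<lambda>x. r *\<^sub>R (x - x0)) \<longlongrightarrow> 0) (nhds x0)"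
proof -
  have "LIM x (nhds x0). (x, - x0) :> nhds x0 \<times>\<^sub>F nhds (- x0)"
    by (rule filterlim_Pair) (auto simp: filterlim_ident)
  from filterlim_compose[OF add_continuous this]
  have "LIM x (nhds x0). x - x0 :> nhds 0" by simp
  then have "LIM x (nhds x0). (r, x - x0) :> nhds r \<times>\<^sub>F nhds 0"
    by (intro filterlim_Pair) auto
  from filterlim_compose[OF scaleR_continuous this] show ?thesis by simp
qed

lemma lcs_nhds_0_absorbing:
  fixes V :: "'a::locally_convex_space set"
  assumes "open V" "0 \<in> V"
  shows "\<exists>t>0. (1/t) *\<^sub>R x \<in> V"
proof -
  have "\<forall>\<^sub>F s in nhds 0. s *\<^sub>R x \<in> V"
    using lcs_tendsto_scaleR_left[of x 0] assms by (simp add: tendsto_def)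
  then have "\<forall>\<^sub>F s in at_right (0::real). s *\<^sub>R x \<in> V"
    by (simp add: eventually_at_filter eventually_mono)
  then obtain b where b: "b > 0" "\<And>s. 0 < s \<Longrightarrow> s < b \<Longrightarrow> s *\<^sub>R x \<in> V"
    by (auto simp: eventually_at_right[of 0 1])
  then have "(1 / (2/b)) *\<^sub>R x \<in> V" by simp
  with b(1) show ?thesis by (intro exI[of _ "2/b"]) auto
qed

lemma lcs_linear_continuous_if_bounded_above:
  fixes f :: "'a::locally_convex_space \<Rightarrow> real"
  assumes f: "linear f" and V: "open V" "0 \<in> V" and bounded: "\<And>x. x \<in> V \<Longrightarrow> f x \<le> 1"
  shows "continuous_on UNIV f"
proof -
  have "(f \<longlongrightarrow> f x0) (nhds x0)" for x0
  proof (rule tendstoI)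
    fix e :: real assume e: "e > 0"
    have "\<forall>\<^sub>F x in nhds x0. r *\<^sub>R (x - x0) \<in> V" for r
      using lcs_tendsto_scaleR_diff[of r x0] V by (simp add: tendsto_def)
    from this[of "2/e"] this[of "-2/e"]
    show "\<forall>\<^sub>F x in nhds x0. dist (f x) (f x0) < e"
    proof eventually_elim
      case (elim x)
      have "f (r *\<^sub>R (x - x0)) = r * (f x - f x0)" for r
        using f by (simp add: linear_scale linear_diff)
      with elim bounded have "(2/e) * (f x - f x0) \<le> 1" "(-2/e) * (f x - f x0) \<le> 1"
        by metis+
      with e show ?case
        by (simp add: dist_real_def field_simps abs_le_iff)
    qed
  qed
  then show ?thesis
    unfolding continuous_on_def at_within_def by (blast intro: tendsto_mono[OF inf_le1])
qed

text \<open>below_gauge V x a means a \<le> p(x) for the Minkowski gauge p(x) = inf {t > 0. x/t \<in> V}.\<close>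
definition below_gauge :: "'a::real_vector set \<Rightarrow> 'a \<Rightarrow> real \<Rightarrow> bool" where
  "below_gauge V x a \<longleftrightarrow> (\<forall>t>0. (1/t) *\<^sub>R x \<in> V \<longrightarrow> a \<le> t)"

definition linear_graph :: "('a::real_vector \<times> real) set \<Rightarrow> bool" where
  "linear_graph G \<longleftrightarrow> subspace G \<and> (\<forall>x a b. (x, a) \<in> G \<longrightarrow> (x, b) \<in> G \<longrightarrow> a = b)"

definition dominated_graph :: "'a::real_vector set \<Rightarrow> 'a \<Rightarrow> ('a \<times> real) set \<Rightarrow> bool" where
  "dominated_graph V y G \<longleftrightarrow>
     linear_graph G \<and> (\<forall>x a. (x, a) \<in> G \<longrightarrow> below_gauge V x a) \<and> (y, 1) \<in> G"

definition graph_extension :: "('a::real_vector \<times> real) set \<Rightarrow> 'a \<Rightarrow> real \<Rightarrow> ('a \<times> real) set" where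
  "graph_extension G z c = {p + q |p q. p \<in> G \<and> q \<in> span {(z, c)}}"

lemma subspace_graph_extension: "subspace G \<Longrightarrow> subspace (graph_extension G z c)"
  unfolding graph_extension_def by (intro subspace_sums subspace_span)

lemma mem_graph_extension:
  "(w, b) \<in> graph_extension G z c \<longleftrightarrow> (\<exists>x a s. (x, a) \<in> G \<and> w = x + s *\<^sub>R z \<and> b = a + s * c)"
  unfolding graph_extension_def span_singleton by force

lemma linear_graph_extension:
  assumes G: "linear_graph G" and z: "\<And>a. (z, a) \<notin> G"
  shows "linear_graph (graph_extension G z c)"
  unfolding linear_graph_def
proof (intro conjI allI impI)
  show "subspace (graph_extension G z c)"
    using G by (simp add: linear_graph_def subspace_graph_extension)
next
  fix w b1 b2 assume "(w, b1) \<in> graph_extension G z c" "(w, b2) \<in> graph_extension G z c"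
  then obtain x a s x' a' s' where p: "(x, a) \<in> G" "w = x + s *\<^sub>R z" "b1 = a + s * c"
    and q: "(x', a') \<in> G" "w = x' + s' *\<^sub>R z" "b2 = a' + s' * c"
    unfolding mem_graph_extension by blast
  have sub: "subspace G" and single: "\<And>x a b. (x, a) \<in> G \<Longrightarrow> (x, b) \<in> G \<Longrightarrow> a = b"
    using G unfolding linear_graph_def by blast+
  have diff: "(x' - x, a' - a) \<in> G"
    using subspace_diff[OF sub q(1) p(1)] by simp
  have "s = s'"
  proof (rule ccontr)
    assume "s \<noteq> s'"
    moreover have "x' - x = (s - s') *\<^sub>R z" using p(2) q(2) by (simp add: algebra_simps)
    ultimately have "(z, (a' - a) / (s - s')) \<in> G"
      using subspace_scale[OF sub diff, of "1 / (s - s')"] by simp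
    with z show False by blast
  qed
  with p q single show "b1 = b2" by auto
qed

lemma below_gauge_add_le:
  assumes V: "convex V" and b: "below_gauge V (u + v) b"
    and t: "t > 0" "(1/t) *\<^sub>R u \<in> V" and t': "t' > 0" "(1/t') *\<^sub>R v \<in> V"
  shows "b \<le> t + t'"
proof -
  have "(t/(t+t')) *\<^sub>R ((1/t) *\<^sub>R u) + (t'/(t+t')) *\<^sub>R ((1/t') *\<^sub>R v) \<in> V"
    using t t' by (intro convexD[OF V]) (simp_all add: add_divide_distrib[symmetric])
  also have "(t/(t+t')) *\<^sub>R ((1/t) *\<^sub>R u) + (t'/(t+t')) *\<^sub>R ((1/t') *\<^sub>R v) = (1/(t+t')) *\<^sub>R (u + v)"
    using t t' by (simp add: scaleR_add_right)
  finally show ?thesis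
    using b t t' unfolding below_gauge_def by simp
qed

lemma exists_graph_extension_value:
  fixes V :: "'a::real_vector set"
  assumes V: "convex V" and absorbing: "\<And>x. \<exists>t>0. (1/t) *\<^sub>R x \<in> V"
    and sub: "subspace G" and G: "\<And>x a. (x, a) \<in> G \<Longrightarrow> below_gauge V x a"
  obtains c where
    "\<And>x a t. (x, a) \<in> G \<Longrightarrow> t > 0 \<Longrightarrow> (1/t) *\<^sub>R (x - z) \<in> V \<Longrightarrow> a - t \<le> c"
    "\<And>x a t. (x, a) \<in> G \<Longrightarrow> t > 0 \<Longrightarrow> (1/t) *\<^sub>R (x + z) \<in> V \<Longrightarrow> c \<le> t - a"
proof -
  define L where "L = {a - t |x a t. (x, a) \<in> G \<and> t > 0 \<and> (1/t) *\<^sub>R (x - z) \<in> V}"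
  define R where "R = {t - a |x a t. (x, a) \<in> G \<and> t > 0 \<and> (1/t) *\<^sub>R (x + z) \<in> V}"
  \<comment> \<open>subadditivity of the gauge\<close>
  have LR: "l \<le> r" if "l \<in> L" "r \<in> R" for l r
  proof -
    obtain x a t where l: "l = a - t" "(x, a) \<in> G" "t > 0" "(1/t) *\<^sub>R (x - z) \<in> V"
      using \<open>l \<in> L\<close> unfolding L_def by blast
    obtain x' a' t' where r: "r = t' - a'" "(x', a') \<in> G" "t' > 0" "(1/t') *\<^sub>R (x' + z) \<in> V"
      using \<open>r \<in> R\<close> unfolding R_def by blast
    have "(x + x', a + a') \<in> G"
      using subspace_add[OF sub l(2) r(2)] by simp
    then have "below_gauge V ((x - z) + (x' + z)) (a + a')"
      using G by simp
    then have "a + a' \<le> t + t'"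
      using below_gauge_add_le[OF V] l r by blast
    with l r show ?thesis by simp
  qed
  have G0: "(0, 0) \<in> G"
    using subspace_0[OF sub] by (simp add: zero_prod_def)
  obtain t0 where "t0 > 0" "(1/t0) *\<^sub>R (0 - z) \<in> V" using absorbing by blast
  with G0 have L_ne: "- t0 \<in> L" unfolding L_def by force
  obtain t1 where "t1 > 0" "(1/t1) *\<^sub>R (0 + z) \<in> V" using absorbing by blast
  with G0 have "t1 \<in> R" unfolding R_def by force
  with LR have "bdd_above L" by (auto simp: bdd_above_def)
  show ?thesis
  proof
    show "a - t \<le> Sup L" if "(x, a) \<in> G" "t > 0" "(1/t) *\<^sub>R (x - z) \<in> V" for x a t
      using that \<open>bdd_above L\<close> by (intro cSup_upper) (auto simp: L_def)
    show "Sup L \<le> t - a" if "(x, a) \<in> G" "t > 0" "(1/t) *\<^sub>R (x + z) \<in> V" for x a t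
    proof (intro cSup_least)
      have "t - a \<in> R" using that unfolding R_def by blast
      then show "l \<le> t - a" if "l \<in> L" for l using LR that by blast
    qed (use L_ne in blast)
  qed
qed

lemma below_gauge_graph_extension:
  assumes sub: "subspace G" and G: "\<And>x a. (x, a) \<in> G \<Longrightarrow> below_gauge V x a"
    and lower: "\<And>x a t. (x, a) \<in> G \<Longrightarrow> t > 0 \<Longrightarrow> (1/t) *\<^sub>R (x - z) \<in> V \<Longrightarrow> a - t \<le> c"
    and upper: "\<And>x a t. (x, a) \<in> G \<Longrightarrow> t > 0 \<Longrightarrow> (1/t) *\<^sub>R (x + z) \<in> V \<Longrightarrow> c \<le> t - a"
    and wb: "(w, b) \<in> graph_extension G z c"
  shows "below_gauge V w b"
  unfolding below_gauge_def
proof (intro allI impI)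
  fix t :: real assume t: "t > 0" and tw: "(1/t) *\<^sub>R w \<in> V"
  obtain x a s where xa: "(x, a) \<in> G" and w: "w = x + s *\<^sub>R z" and b: "b = a + s * c"
    using wb unfolding mem_graph_extension by blast
  have scaled: "((1/r) *\<^sub>R x, a / r) \<in> G" for r
    using subspace_scale[OF sub xa, of "1/r"] by simp
  consider "s > 0" | "s < 0" | "s = 0" by linarith
  then show "b \<le> t"
  proof cases
    case 1
    have "(1/(t/s)) *\<^sub>R ((1/s) *\<^sub>R x + z) = (1/t) *\<^sub>R w"
      using 1 w by (simp add: scaleR_add_right)
    then have "c \<le> t/s - a/s"
      using upper[OF scaled] 1 t tw by simp
    then have "s * c \<le> t - a"
      using 1 by (simp add: field_simps)
    with b show ?thesis by simp
  next
    case 2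
    define r where "r = - s"
    have r: "r > 0" using 2 by (simp add: r_def)
    have "(1/(t/r)) *\<^sub>R ((1/r) *\<^sub>R x - z) = (1/t) *\<^sub>R w"
      using r w by (simp add: r_def scaleR_add_right scaleR_diff_right)
    then have "a/r - t/r \<le> c"
      using lower[OF scaled, of "t/r"] r t tw by simp
    then have "a - t \<le> r * c"
      using r by (simp add: field_simps)
    with b show ?thesis by (simp add: r_def)
  next
    case 3
    with G[OF xa] t tw w b show ?thesis unfolding below_gauge_def by simp
  qed
qed

lemma dominated_graph_extend:
  assumes G: "dominated_graph V y G" and V: "convex V" and absorbing: "\<And>x. \<exists>t>0. (1/t) *\<^sub>R x \<in> V"
    and z: "\<And>a. (z, a) \<notin> G"
  obtains G' where "dominated_graph V y G'" "G \<subset> G'"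
proof -
  have lin: "linear_graph G" and sub: "subspace G" and dom: "\<And>x a. (x, a) \<in> G \<Longrightarrow> below_gauge V x a"
    and y: "(y, 1) \<in> G"
    using G unfolding dominated_graph_def linear_graph_def by blast+
  obtain c where
    lower: "\<And>x a t. (x, a) \<in> G \<Longrightarrow> t > 0 \<Longrightarrow> (1/t) *\<^sub>R (x - z) \<in> V \<Longrightarrow> a - t \<le> c" and
    upper: "\<And>x a t. (x, a) \<in> G \<Longrightarrow> t > 0 \<Longrightarrow> (1/t) *\<^sub>R (x + z) \<in> V \<Longrightarrow> c \<le> t - a"
    using exists_graph_extension_value[OF V absorbing sub dom] by blast
  have "G \<subseteq> graph_extension G z c"
  proof clarify
    show "(x, a) \<in> graph_extension G z c" if "(x, a) \<in> G" for x a
      unfolding mem_graph_extension using that by (intro exI[of _ x] exI[of _ a] exI[of _ "0::real"]) simp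
  qed
  moreover have "(z, c) \<in> graph_extension G z c"
    unfolding mem_graph_extension using subspace_0[OF sub]
    by (intro exI[of _ 0] exI[of _ "0::real"] exI[of _ "1::real"]) (simp add: zero_prod_def)
  moreover have "dominated_graph V y (graph_extension G z c)"
    unfolding dominated_graph_def
    using linear_graph_extension[OF lin z] below_gauge_graph_extension[of G V z c] sub dom lower upper
      \<open>G \<subseteq> graph_extension G z c\<close> y by blast
  ultimately show ?thesis
    using z that by blast
qed

lemma dominated_graph_Union_chain:
  assumes "C \<noteq> {}" and chain: "chain\<^sub>\<subseteq> C" and C: "\<And>G. G \<in> C \<Longrightarrow> dominated_graph V y G"
  shows "dominated_graph V y (\<Union>C)"
proof -
  have common: "\<exists>G\<in>C. p \<in> G \<and> q \<in> G" if "p \<in> \<Union>C" "q \<in> \<Union>C" for p q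
    using that chain unfolding chain_subset_def by blast
  have sub: "subspace G" and single: "\<And>x a b. (x, a) \<in> G \<Longrightarrow> (x, b) \<in> G \<Longrightarrow> a = b"
    and gauge: "\<And>x a. (x, a) \<in> G \<Longrightarrow> below_gauge V x a" and y: "(y, 1) \<in> G"
    if "G \<in> C" for G
    using C[OF that] unfolding dominated_graph_def linear_graph_def by blast+
  obtain G0 where "G0 \<in> C" using \<open>C \<noteq> {}\<close> by blast
  have "subspace (\<Union>C)"
    unfolding subspace_def
  proof (intro conjI ballI allI)
    show "0 \<in> \<Union>C"
      using subspace_0[OF sub] \<open>G0 \<in> C\<close> by blast
    show "p + q \<in> \<Union>C" if "p \<in> \<Union>C" "q \<in> \<Union>C" for p q
      using common[OF that] subspace_add[OF sub] by blast
    show "r *\<^sub>R p \<in> \<Union>C" if "p \<in> \<Union>C" for r p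
      using that subspace_scale[OF sub] by blast
  qed
  moreover have "a = b" if "(x, a) \<in> \<Union>C" "(x, b) \<in> \<Union>C" for x a b
    using common[OF that] single by blast
  moreover have "below_gauge V x a" if "(x, a) \<in> \<Union>C" for x a
    using that gauge by blast
  moreover have "(y, 1) \<in> \<Union>C"
    using y \<open>G0 \<in> C\<close> by blast
  ultimately show ?thesis
    unfolding dominated_graph_def linear_graph_def by blast
qed

lemma dominated_graph_line:
  assumes V: "convex V" "0 \<in> V" and y: "y \<notin> V"
  shows "dominated_graph V y (span {(y, 1)})"
  unfolding dominated_graph_def linear_graph_def
proof (intro conjI allI impI)
  show "subspace (span {(y, 1::real)})" by (rule subspace_span)
  show "(y, 1::real) \<in> span {(y, 1::real)}" by (rule span_base) simp
  have y0: "y \<noteq> 0" using V y by auto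
  have line: "x = a *\<^sub>R y" if "(x, a) \<in> span {(y, 1::real)}" for x a
    using that unfolding span_singleton by auto
  show "a = b" if "(x, a) \<in> span {(y, 1::real)}" "(x, b) \<in> span {(y, 1::real)}" for x a b
    using line[OF that(1)] line[OF that(2)] y0 by simp
  show "below_gauge V x a" if "(x, a) \<in> span {(y, 1::real)}" for x a
    unfolding below_gauge_def
  proof (intro allI impI)
    fix t :: real assume t: "t > 0" "(1/t) *\<^sub>R x \<in> V"
    show "a \<le> t"
    proof (rule ccontr)
      assume "\<not> a \<le> t"
      then have "(t/a) *\<^sub>R ((1/t) *\<^sub>R x) + (1 - t/a) *\<^sub>R 0 \<in> V"
        using t by (intro convexD[OF V(1) t(2) V(2)]) auto
      with line[OF that] t \<open>\<not> a \<le> t\<close> y show False by simp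
    qed
  qed
qed

lemma linear_graph_imp_linear:
  assumes G: "linear_graph G" and total: "\<And>x. \<exists>a. (x, a) \<in> G"
  obtains f where "linear f" "\<And>x. (x, f x) \<in> G"
proof
  define f where "f x = (THE a. (x, a) \<in> G)" for x
  have sub: "subspace G" and single: "\<And>x a b. (x, a) \<in> G \<Longrightarrow> (x, b) \<in> G \<Longrightarrow> a = b"
    using G unfolding linear_graph_def by blast+
  show graph: "(x, f x) \<in> G" for x
    unfolding f_def using total single by (metis theI)
  have eq: "f x = a" if "(x, a) \<in> G" for x a
    using single[OF graph that] .
  show "linear f"
  proof (rule linearI)
    show "f (x + x') = f x + f x'" for x x'
      using eq subspace_add[OF sub graph graph] by simp
    show "f (r *\<^sub>R x) = r *\<^sub>R f x" for r x
      using eq subspace_scale[OF sub graph] by simp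
  qed
qed

lemma exists_linear_below_gauge:
  fixes V :: "'a::real_vector set"
  assumes V: "convex V" "0 \<in> V" and absorbing: "\<And>x. \<exists>t>0. (1/t) *\<^sub>R x \<in> V" and y: "y \<notin> V"
  obtains f where "linear f" "\<And>x. below_gauge V x (f x)" "f y = 1"
proof -
  define \<G> where "\<G> = {G. dominated_graph V y G}"
  have "\<exists>U\<in>\<G>. \<forall>G\<in>C. G \<subseteq> U" if "C \<in> chains \<G>" for C
  proof (cases "C = {}")
    case True
    with dominated_graph_line[OF V y] show ?thesis unfolding \<G>_def by blast
  next
    case False
    moreover have "C \<subseteq> \<G>" "chain\<^sub>\<subseteq> C" using that unfolding chains_def by auto
    ultimately have "\<Union>C \<in> \<G>"
      using dominated_graph_Union_chain unfolding \<G>_def by blast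
    then show ?thesis by blast
  qed
  then obtain G where "G \<in> \<G>" and max: "\<And>G'. G' \<in> \<G> \<Longrightarrow> G \<subseteq> G' \<Longrightarrow> G' = G"
    by (metis Zorn_Lemma2)
  then have G: "dominated_graph V y G" unfolding \<G>_def by simp
  have "\<exists>a. (x, a) \<in> G" for x
  proof (rule ccontr)
    assume "\<nexists>a. (x, a) \<in> G"
    then obtain G' where "dominated_graph V y G'" "G \<subset> G'"
      using dominated_graph_extend[OF G V(1) absorbing] by blast
    with max show False unfolding \<G>_def by blast
  qed
  moreover have "linear_graph G" using G unfolding dominated_graph_def by simp
  ultimately obtain f where f: "linear f" "\<And>x. (x, f x) \<in> G"
    using linear_graph_imp_linear by blast
  moreover have "below_gauge V x (f x)" for x
    using G f(2) unfolding dominated_graph_def by blast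
  moreover have "f y = 1"
    using G f(2) unfolding dominated_graph_def linear_graph_def by blast
  ultimately show ?thesis using that by blast
qed

lemma topdual_separates_points:
  fixes y :: "'a::locally_convex_space"
  assumes "y \<noteq> 0"
  obtains f where "f \<in> topdual" "f y > 0"
proof -
  obtain V where V: "open V" "convex V" "0 \<in> V" "V \<subseteq> - {y}"
    using convex_nhds_base[of "- {y}"] assms unfolding convex_def by (auto simp: open_Compl)
  obtain f where f: "linear f" "\<And>x. below_gauge V x (f x)" "f y = 1"
    using exists_linear_below_gauge[OF V(2,3) lcs_nhds_0_absorbing[OF V(1,3)]] V(4) by blast
  have "f x \<le> 1" if "x \<in> V" for x
    using f(2)[of x] that unfolding below_gauge_def by (metis div_by_1 scaleR_one zero_less_one)
  then have "continuous_on UNIV f"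
    using lcs_linear_continuous_if_bounded_above[OF f(1) V(1,3)] by blast
  with f that show ?thesis unfolding topdual_def by simp
qed

lemma support_fun_singleton_0:
  assumes "f \<in> topdual" shows "support_fun f {0} = 0"
  using assms linear_0[of f] unfolding topdual_def support_fun_def by (simp add: zero_ereal_def)

lemma cc_sets_eq_0_if_support_fun_0:
  fixes C :: "'a::locally_convex_space set"
  assumes "C \<in> cc_sets" and support: "\<And>f. f \<in> topdual \<Longrightarrow> support_fun f C = 0"
  shows "C = {0}"
proof -
  have "y = 0" if "y \<in> C" for y
  proof (rule ccontr)
    assume "y \<noteq> 0"
    then obtain f where f: "f \<in> topdual" "f y > 0" by (rule topdual_separates_points)
    have "ereal (f y) \<le> support_fun f C"
      unfolding support_fun_def using that by (rule SUP_upper)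
    with f support show False by simp
  qed
  with assms(1) show ?thesis unfolding cc_sets_def by blast
qed

lemma multimeasure_empty:
  fixes M :: "'b set \<Rightarrow> 'a::locally_convex_space set"
  assumes "multimeasure S M"
  shows "M {} = {0}"
  using assms by (intro cc_sets_eq_0_if_support_fun_0) (auto simp: multimeasure_def ext_signed_measure_def)

lemma countable_disjoint_enumeration:
  assumes "countable F" "disjoint F"
  obtains G :: "nat \<Rightarrow> 'a set" where "disjoint_family G" "\<And>n. G n \<in> insert {} F" "(\<Union>n. G n) = \<Union>F"
proof
  define G where "G n = (if n \<in> to_nat_on F ` F then from_nat_into F n else {})" for n
  show "G n \<in> insert {} F" for n
    unfolding G_def using assms(1) by auto
  show "disjoint_family G"
    unfolding disjoint_family_on_def
  proof (intro ballI impI)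
    fix m n :: nat assume "m \<noteq> n"
    show "G m \<inter> G n = {}"
    proof (cases "m \<in> to_nat_on F ` F \<and> n \<in> to_nat_on F ` F")
      case True
      then obtain e e' where "e \<in> F" "e' \<in> F" "m = to_nat_on F e" "n = to_nat_on F e'"
        by blast
      moreover from this \<open>m \<noteq> n\<close> have "e \<noteq> e'" by blast
      ultimately show ?thesis
        unfolding G_def using assms by (simp add: disjointD)
    qed (auto simp: G_def)
  qed
  show "(\<Union>n. G n) = \<Union>F"
    unfolding G_def using assms(1)
    by (auto intro!: UN_I[of "to_nat_on F _"] split: if_splits)
qed

lemma multimeasure_null_countable_Union:
  fixes M :: "'b set \<Rightarrow> 'a::locally_convex_space set"
  assumes M: "multimeasure S M" and F: "countable F" "disjoint F" "F \<subseteq> mm_null S M"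
  shows "\<Union>F \<in> mm_null S M"
proof -
  obtain G :: "nat \<Rightarrow> 'b set" where G: "disjoint_family G" "\<And>n. G n \<in> insert {} F" "(\<Union>n. G n) = \<Union>F"
    using countable_disjoint_enumeration[OF F(1,2)] by blast
  have G_null: "G n \<in> mm_null S M" for n
    using G(2)[of n] F(3) multimeasure_empty[OF M] unfolding mm_null_def by auto
  then have "range G \<subseteq> sets S" unfolding mm_null_def by auto
  then have UF: "\<Union>F \<in> sets S" using G(3) by (metis sets.countable_UN)
  have "M (\<Union>F) = {0}"
  proof (rule cc_sets_eq_0_if_support_fun_0)
    show "M (\<Union>F) \<in> cc_sets" using M UF unfolding multimeasure_def by blast
  next
    fix f :: "'a \<Rightarrow> real" assume f: "f \<in> topdual"
    then have "(\<lambda>n. \<Sum>i<n. support_fun f (M (G i))) \<longlonglongrightarrow> support_fun f (M (\<Union>n. G n))"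
      using M \<open>range G \<subseteq> sets S\<close> G(1) unfolding multimeasure_def ext_signed_measure_def by blast
    moreover have "support_fun f (M (G n)) = 0" for n
      using G_null[of n] support_fun_singleton_0[OF f] unfolding mm_null_def by simp
    ultimately have "(\<lambda>n. 0) \<longlonglongrightarrow> support_fun f (M (\<Union>F))" using G(3) by simp
    then show "support_fun f (M (\<Union>F)) = 0" by (simp add: LIMSEQ_const_iff)
  qed
  with UF show ?thesis unfolding mm_null_def by blast
qed

lemma multimeasure_null_Un:
  fixes M :: "'b set \<Rightarrow> 'a::locally_convex_space set"
  assumes "multimeasure S M" "E \<in> mm_null S M" "F \<in> mm_null S M" "E \<inter> F = {}"
  shows "E \<union> F \<in> mm_null S M"
proof -
  have "disjoint {E, F}"
    using assms(4) unfolding disjoint_def by blast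
  then have "\<Union>{E, F} \<in> mm_null S M"
    using assms(2,3) by (intro multimeasure_null_countable_Union[OF assms(1)]) auto
  then show ?thesis by simp
qed

lemma exists_maximal_disjoint_subfamily:
  fixes P :: "'a set set"
  obtains D where "D \<subseteq> P" "disjoint D" "\<And>E. E \<in> P \<Longrightarrow> E \<inter> \<Union>D = {} \<Longrightarrow> E = {}"
proof -
  have "\<forall>C\<in>chains {D. D \<subseteq> P \<and> disjoint D}. \<Union>C \<in> {D. D \<subseteq> P \<and> disjoint D}"
    unfolding chains_def by (blast intro: pairwise_chain_Union)
  then obtain D where D: "D \<subseteq> P" "disjoint D"
    and max: "\<And>D'. D' \<subseteq> P \<Longrightarrow> disjoint D' \<Longrightarrow> D \<subseteq> D' \<Longrightarrow> D' = D"
    by (metis (no_types, lifting) Zorn_Lemma mem_Collect_eq)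
  have "E = {}" if "E \<in> P" "E \<inter> \<Union>D = {}" for E
  proof -
    have "disjoint (insert E D)"
      using D(2) that(2) by (auto simp: pairwise_insert disjnt_def)
    then have "insert E D = D" using max D(1) that(1) by blast
    with that(2) show ?thesis by blast
  qed
  with D that show ?thesis by blast
qed

theorem lemma3p2:
  fixes S :: "'b measure" and M N :: "'b set \<Rightarrow> 'a::locally_convex_space set"
  assumes "multimeasure S M" and "multimeasure S N"
    and "mm_abs_cont S M N" and "mm_ccc S N"
    and "A \<in> sets S - mm_null S M"
  shows "\<exists>B \<in> sets S - mm_null S M. B \<subseteq> A \<and>
           (\<forall>E \<in> sets S. E \<subseteq> B \<longrightarrow> M E = {0} \<longrightarrow> N E = {0})"
proof -
  define P where "P = {E \<in> sets S. E \<subseteq> A \<and> M E = {0} \<and> N E \<noteq> {0}}"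
  obtain D where D: "D \<subseteq> P" "disjoint D" and max: "\<And>E. E \<in> P \<Longrightarrow> E \<inter> \<Union>D = {} \<Longrightarrow> E = {}"
    using exists_maximal_disjoint_subfamily[of P] by blast
  have "D \<subseteq> sets S - mm_null S N" "D \<subseteq> mm_null S M"
    using D(1) unfolding P_def mm_null_def by auto
  with assms(4) D(2) have D_null: "\<Union>D \<in> mm_null S M"
    unfolding mm_ccc_def by (blast intro: multimeasure_null_countable_Union[OF assms(1)])
  define B where "B = A - \<Union>D"
  have B: "B \<in> sets S" "B \<subseteq> A" "\<Union>D \<union> B = A"
    using assms(5) D_null D(1) unfolding B_def P_def mm_null_def by auto
  then have B_not_null: "B \<notin> mm_null S M"
    using multimeasure_null_Un[OF assms(1) D_null, of B] assms(5) unfolding B_def by auto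
  have "N E = {0}" if E: "E \<in> sets S" "E \<subseteq> B" "M E = {0}" for E
  proof (rule ccontr)
    assume "N E \<noteq> {0}"
    with E B(2) have "E \<in> P" unfolding P_def by auto
    moreover have "E \<inter> \<Union>D = {}" using E(2) unfolding B_def by auto
    ultimately have "E = {}" by (rule max)
    with \<open>N E \<noteq> {0}\<close> multimeasure_empty[OF assms(2)] show False by simp
  qed
  with B B_not_null show ?thesis
    by (intro bexI[of _ B]) auto
qed

end
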